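(* Let $F$ be an infinite field of characteristic $p>2$ and $k$ a positive integer. Let $x^i_1,\dots,x^i_{h_i}$ ($i=1,\dots,k$) be distinct variables, $x^i_t$ of degree $i$, and consider the graded monomial $T=(x^1_1)^{r^1_1}\cdots(x^1_{h_1})^{r^1_{h_1}}\cdots(x^k_1)^{r^k_1}\cdots(x^k_{h_k})^{r^k_{h_k}}$ with non-negative integer exponents. Let $r=\max\{r^i_t\}$. If $p>r$, then $T$ is not a $\mathbb{Z}$-graded identity of $E^{\infty}$.
   Context: $L$ is a vector space over $F$ with basis $e_1,e_2,\dots$, $E$ its unital Grassmann algebra (basis $1$ and $e_{i_1}\cdots e_{i_k}$, $i_1<\cdots<i_k$, with $e_ie_j=-e_je_i$). $E^{\infty}$ is $E$ with the $\mathbb{Z}$-grading induced by $\|e_i\|=0$ for $i$ even and $\|e_i\|=1$ for $i$ odd (basis monomials get the sum of degrees of their factors; $1$ has degree $0$). A graded polynomial is a graded identity of $A$ if it vanishes whenever each variable is replaced by an element of the homogeneous component of $A$ of that variable's degree. *)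

theory Defs
  imports Main
begin

text \<open>Unital Grassmann algebra E over a field, with generators e_1, e_2, ...
  An element is a coefficient function on finite index sets S (the basis
  monomial e_{i_1}...e_{i_k}, i_1 < ... < i_k, for S = {i_1,...,i_k}), with
  finitely many nonzero coefficients, supported on sets of positive indices.\<close>

definition grass_elem :: "(nat set \<Rightarrow> 'a::field) \<Rightarrow> bool" where
  "grass_elem f \<longleftrightarrow> finite {S. f S \<noteq> 0} \<and>
     (\<forall>S. f S \<noteq> 0 \<longrightarrow> finite S \<and> 0 \<notin> S)"

text \<open>Sign from reordering e_S e_T: (-1) to the number of inversions.\<close>
definition grass_sign :: "nat set \<Rightarrow> nat set \<Rightarrow> 'a::field" where
  "grass_sign S T = (-1) ^ card {(i, j). i \<in> S \<and> j \<in> T \<and> j < i}"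

definition grass_mult :: "(nat set \<Rightarrow> 'a::field) \<Rightarrow> (nat set \<Rightarrow> 'a) \<Rightarrow> nat set \<Rightarrow> 'a" where
  "grass_mult f g U = (if finite U then
      (\<Sum>S\<in>Pow U. grass_sign S (U - S) * f S * g (U - S)) else 0)"

definition grass_one :: "nat set \<Rightarrow> 'a::field" where
  "grass_one S = (if S = {} then 1 else 0)"

fun grass_prod_list :: "(nat set \<Rightarrow> 'a::field) list \<Rightarrow> nat set \<Rightarrow> 'a" where
  "grass_prod_list [] = grass_one"
| "grass_prod_list (f # fs) = grass_mult f (grass_prod_list fs)"

text \<open>Z-grading of E^infinity: ||e_i|| = 0 for i even, 1 for i odd; the degree
  of e_S is the number of odd indices in S.  Homogeneous component of degree d.\<close>
definition grass_hom :: "nat \<Rightarrow> (nat set \<Rightarrow> 'a::field) \<Rightarrow> bool" where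
  "grass_hom d f \<longleftrightarrow> grass_elem f \<and>
     (\<forall>S. f S \<noteq> 0 \<longrightarrow> card {j \<in> S. odd j} = d)"

text \<open>The graded monomial
  T = (x^1_1)^{r 1 1} ... (x^1_{h 1})^{r 1 (h 1)} ... (x^k_1)^{r k 1} ... (x^k_{h k})^{r k (h k)}
  evaluated at the substitution x^i_t := a i t.\<close>
definition monomial_eval ::
  "nat \<Rightarrow> (nat \<Rightarrow> nat) \<Rightarrow> (nat \<Rightarrow> nat \<Rightarrow> nat) \<Rightarrow> (nat \<Rightarrow> nat \<Rightarrow> nat set \<Rightarrow> 'a::field) \<Rightarrow> nat set \<Rightarrow> 'a" where
  "monomial_eval k h r a =
     grass_prod_list (concat (map (\<lambda>i. concat (map (\<lambda>t. replicate (r i t) (a i t)) [1..<Suc (h i)])) [1..<Suc k]))"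

definition graded_identity_Einf ::
  "nat \<Rightarrow> (nat \<Rightarrow> nat) \<Rightarrow> (nat \<Rightarrow> nat \<Rightarrow> nat) \<Rightarrow> 'a::field itself \<Rightarrow> bool" where
  "graded_identity_Einf k h r _ \<longleftrightarrow>
     (\<forall>a :: nat \<Rightarrow> nat \<Rightarrow> nat set \<Rightarrow> 'a.
        (\<forall>i t. 1 \<le> i \<and> i \<le> k \<and> 1 \<le> t \<and> t \<le> h i \<longrightarrow> grass_hom i (a i t)) \<longrightarrow>
        monomial_eval k h r a = (\<lambda>_. 0))"

end

theory Submission
  imports Defs "HOL-Library.Nat_Bijection"
begin

text \<open>For m \<ge> 0 the monomial e_{2m+1} e_{2m+2} has Z-degree 1 and even length, so it is
  central and squares to zero; products of distinct such blocks therefore behave like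
  commuting variables.  Substitute for x^i_t the sum of r^i_t monomials, each a product of
  i blocks, with all blocks occurring anywhere pairwise distinct.  Then x^i_t lies in the
  component of degree i, and in the evaluation of T the product of all blocks occurs with
  coefficient the product of the factorials r^i_t!, which is nonzero since r^i_t < p.\<close>

definition pair_block :: "nat \<Rightarrow> nat set" where
  "pair_block m = {2 * m + 1, 2 * m + 2}"

definition blocks :: "nat set \<Rightarrow> nat set" where
  "blocks M = \<Union> (pair_block ` M)"

lemma mem_blocks_iff: "x \<in> blocks M \<longleftrightarrow> x > 0 \<and> (x - 1) div 2 \<in> M"
proof
  assume "x \<in> blocks M"
  then show "x > 0 \<and> (x - 1) div 2 \<in> M"
    unfolding blocks_def pair_block_def by auto
next
  assume x: "x > 0 \<and> (x - 1) div 2 \<in> M"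
  have "x = 2 * ((x - 1) div 2) + 1 \<or> x = 2 * ((x - 1) div 2) + 2"
    using x[THEN conjunct1] by presburger
  with x show "x \<in> blocks M"
    unfolding blocks_def pair_block_def by blast
qed

lemma blocks_subset_iff: "blocks M \<subseteq> blocks M' \<longleftrightarrow> M \<subseteq> M'"
proof
  assume sub: "blocks M \<subseteq> blocks M'"
  show "M \<subseteq> M'"
  proof
    fix m assume "m \<in> M"
    then have "2 * m + 1 \<in> blocks M'"
      using sub[unfolded subset_iff, rule_format, of "2 * m + 1"] by (simp add: mem_blocks_iff)
    then show "m \<in> M'" by (simp add: mem_blocks_iff)
  qed
qed (auto simp: mem_blocks_iff)

lemma blocks_eq_iff: "blocks M = blocks M' \<longleftrightarrow> M = M'"
  by (metis blocks_subset_iff subset_antisym order_refl)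

lemma blocks_Diff: "blocks (A - B) = blocks A - blocks B"
  by (auto simp: mem_blocks_iff)

lemma blocks_empty [simp]: "blocks {} = {}"
  by (simp add: blocks_def)

lemma finite_blocks: "finite M \<Longrightarrow> finite (blocks M)"
  by (simp add: blocks_def pair_block_def)

lemma zero_notin_blocks: "0 \<notin> blocks M"
  by (simp add: mem_blocks_iff)

lemma card_odd_blocks:
  assumes "finite M"
  shows "card {j \<in> blocks M. odd j} = card M"
proof -
  have "{j \<in> blocks M. odd j} = (\<lambda>m. 2 * m + 1) ` M"
    by (auto simp: blocks_def pair_block_def)
  moreover have "inj_on (\<lambda>m::nat. 2 * m + 1) M"
    by (auto simp: inj_on_def)
  ultimately show ?thesis by (simp add: card_image)
qed

text \<open>Between distinct blocks the inversions come in groups of four.\<close>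
lemma grass_sign_blocks:
  assumes "M \<inter> M' = {}" "finite M" "finite M'"
  shows "grass_sign (blocks M) (blocks M') = (1::'a::field)"
proof -
  let ?Q = "{(m, m'). m \<in> M \<and> m' \<in> M' \<and> m' < m}"
  have "finite ?Q"
    by (rule finite_subset[of _ "M \<times> M'"]) (auto simp: assms)
  have inversions: "{(i, j). i \<in> blocks M \<and> j \<in> blocks M' \<and> j < i}
      = (\<Union>q\<in>?Q. pair_block (fst q) \<times> pair_block (snd q))"
  proof (intro set_eqI iffI)
    fix x assume "x \<in> {(i, j). i \<in> blocks M \<and> j \<in> blocks M' \<and> j < i}"
    then obtain i j m m' where x: "x = (i, j)" "m \<in> M" "m' \<in> M'"
        "i \<in> pair_block m" "j \<in> pair_block m'" "j < i"
      by (auto simp: blocks_def)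
    moreover have "m \<noteq> m'" using assms(1) x by auto
    ultimately have "m' < m" by (auto simp: pair_block_def)
    with x show "x \<in> (\<Union>q\<in>?Q. pair_block (fst q) \<times> pair_block (snd q))" by auto
  qed (auto simp: blocks_def pair_block_def)
  have "card (\<Union>q\<in>?Q. pair_block (fst q) \<times> pair_block (snd q))
      = (\<Sum>q\<in>?Q. card (pair_block (fst q) \<times> pair_block (snd q)))"
    by (rule card_UN_disjoint) (use \<open>finite ?Q\<close> in \<open>auto simp: pair_block_def\<close>)
  also have "\<dots> = (\<Sum>q\<in>?Q. 4)"
    by (rule sum.cong) (auto simp: pair_block_def card_cartesian_product)
  finally show ?thesis
    unfolding grass_sign_def inversions by simp
qed

definition block_sum :: "nat \<Rightarrow> (nat \<Rightarrow> nat set) \<Rightarrow> nat set \<Rightarrow> 'a::field" where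
  "block_sum R D S = (if \<exists>c<R. S = blocks (D c) then 1 else 0)"

lemma grass_hom_block_sum:
  assumes "\<forall>c<R. finite (D c) \<and> card (D c) = d"
  shows "grass_hom d (block_sum R D :: nat set \<Rightarrow> 'a::field)"
proof -
  have "{S. (block_sum R D S :: 'a) \<noteq> 0} \<subseteq> (\<lambda>c. blocks (D c)) ` {..<R}"
    by (auto simp: block_sum_def split: if_splits)
  moreover have "finite S \<and> 0 \<notin> S \<and> card {j \<in> S. odd j} = d"
    if "(block_sum R D S :: 'a) \<noteq> 0" for S
    using that assms by (auto simp: block_sum_def finite_blocks zero_notin_blocks card_odd_blocks
        split: if_splits)
  ultimately show ?thesis
    unfolding grass_hom_def grass_elem_def by (auto intro: finite_subset)
qed

lemma grass_mult_block_sum: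
  assumes nonempty: "\<forall>c<R. D c \<noteq> {}"
    and disjoint: "\<forall>c<R. \<forall>c'<R. c \<noteq> c' \<longrightarrow> D c \<inter> D c' = {}"
    and "finite X"
  shows "grass_mult (block_sum R D) g (blocks X)
    = (\<Sum>c | c < R \<and> D c \<subseteq> X. g (blocks (X - D c)))"
proof -
  let ?C = "{c. c < R \<and> D c \<subseteq> X}"
  let ?term = "\<lambda>S. grass_sign S (blocks X - S) * block_sum R D S * g (blocks X - S)"
  have "grass_mult (block_sum R D) g (blocks X) = (\<Sum>S\<in>Pow (blocks X). ?term S)"
    using \<open>finite X\<close> by (simp add: grass_mult_def finite_blocks)
  also have "\<dots> = (\<Sum>S\<in>(\<lambda>c. blocks (D c)) ` ?C. ?term S)"
    by (rule sum.mono_neutral_right)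
      (use blocks_subset_iff in \<open>auto simp: \<open>finite X\<close> finite_blocks block_sum_def\<close>)
  also have "\<dots> = (\<Sum>c\<in>?C. ?term (blocks (D c)))"
  proof (rule sum.reindex_cong [OF _ refl])
    show "inj_on (\<lambda>c. blocks (D c)) ?C"
      using nonempty disjoint by (fastforce simp: inj_on_def blocks_eq_iff)
  qed simp
  also have "\<dots> = (\<Sum>c\<in>?C. g (blocks (X - D c)))"
  proof (rule sum.cong [OF refl])
    fix c assume c: "c \<in> ?C"
    then have "finite (D c)" using \<open>finite X\<close> finite_subset by blast
    then have "grass_sign (blocks (D c)) (blocks (X - D c)) = (1::'a)"
      using \<open>finite X\<close> by (intro grass_sign_blocks) auto
    with c show "?term (blocks (D c)) = g (blocks (X - D c))"
      by (auto simp: block_sum_def blocks_Diff)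
  qed
  finally show ?thesis .
qed

lemma grass_prod_replicate_block_sum:
  assumes nonempty: "\<forall>c<R. finite (D c) \<and> D c \<noteq> {}"
    and disjoint: "\<forall>c<R. \<forall>c'<R. c \<noteq> c' \<longrightarrow> D c \<inter> D c' = {}"
    and W: "finite W" "\<forall>c<R. D c \<inter> W = {}"
    and "C \<subseteq> {..<R}"
  shows "grass_prod_list (replicate (card C) (block_sum R D) @ L) (blocks (\<Union>(D ` C) \<union> W))
    = of_nat (fact (card C)) * (grass_prod_list L (blocks W) :: 'a::field)"
  using \<open>C \<subseteq> {..<R}\<close>
proof (induction "card C" arbitrary: C)
  case 0
  then have "C = {}" using finite_subset[of C "{..<R}"] by auto
  then show ?case by simp
next
  case (Suc n)
  let ?X = "\<Union>(D ` C) \<union> W"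
  have "finite C" using Suc.prems finite_subset by blast
  then have "finite ?X" using Suc.prems nonempty W by auto
  have selected: "{c. c < R \<and> D c \<subseteq> ?X} = C"
  proof (intro set_eqI iffI)
    fix c assume c: "c \<in> {c. c < R \<and> D c \<subseteq> ?X}"
    then obtain x where x: "x \<in> D c" using nonempty by blast
    with c W obtain c' where "c' \<in> C" "x \<in> D c'" by blast
    with c x Suc.prems disjoint show "c \<in> C" by blast
  qed (use Suc.prems in auto)
  have removed: "?X - D c = \<Union>(D ` (C - {c})) \<union> W" if "c \<in> C" for c
    using that Suc.prems disjoint W by blast
  have "grass_prod_list (replicate (card C) (block_sum R D) @ L) (blocks ?X)
      = (\<Sum>c\<in>C. grass_prod_list (replicate n (block_sum R D) @ L) (blocks (?X - D c)))"
    using grass_mult_block_sum[OF _ disjoint \<open>finite ?X\<close>] nonempty selected Suc.hyps(2)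
    by (simp flip: Suc.hyps(2))
  also have "\<dots> = (\<Sum>c\<in>C. of_nat (fact n) * grass_prod_list L (blocks W))"
  proof (rule sum.cong [OF refl])
    fix c assume "c \<in> C"
    then have "card (C - {c}) = n" using Suc.hyps(2) \<open>finite C\<close> by simp
    then show "grass_prod_list (replicate n (block_sum R D) @ L) (blocks (?X - D c))
        = of_nat (fact n) * grass_prod_list L (blocks W)"
      using Suc.hyps(1)[of "C - {c}"] Suc.prems removed[OF \<open>c \<in> C\<close>] by auto
  qed
  also have "\<dots> = of_nat (fact (card C)) * grass_prod_list L (blocks W)"
    by (simp flip: Suc.hyps(2) add: algebra_simps)
  finally show ?case .
qed

lemma grass_prod_block_sums:
  fixes G :: "'k list" and R :: "'k \<Rightarrow> nat" and D :: "'k \<Rightarrow> nat \<Rightarrow> nat set"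
  assumes "distinct G"
    and "\<forall>v\<in>set G. \<forall>c<R v. finite (D v c) \<and> D v c \<noteq> {}"
    and "\<forall>v\<in>set G. \<forall>v'\<in>set G. \<forall>c<R v. \<forall>c'<R v'. (v, c) \<noteq> (v', c') \<longrightarrow> D v c \<inter> D v' c' = {}"
  shows "grass_prod_list (concat (map (\<lambda>v. replicate (R v) (block_sum (R v) (D v))) G))
      (blocks (\<Union>v\<in>set G. \<Union>c<R v. D v c)) = (\<Prod>v\<leftarrow>G. of_nat (fact (R v)) :: 'a::field)"
  using assms
proof (induction G)
  case Nil
  then show ?case by (simp add: grass_one_def)
next
  case (Cons v G)
  let ?W = "\<Union>v\<in>set G. \<Union>c<R v. D v c"
  have "finite ?W" using Cons.prems(2) by auto
  moreover have "\<forall>c<R v. D v c \<inter> ?W = {}"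
    using Cons.prems(1,3) by fastforce
  ultimately have "grass_prod_list (replicate (card {..<R v}) (block_sum (R v) (D v))
        @ concat (map (\<lambda>v. replicate (R v) (block_sum (R v) (D v))) G))
      (blocks (\<Union>(D v ` {..<R v}) \<union> ?W))
    = of_nat (fact (card {..<R v}))
      * grass_prod_list (concat (map (\<lambda>v. replicate (R v) (block_sum (R v) (D v))) G)) (blocks ?W)"
    using Cons.prems(2,3) by (intro grass_prod_replicate_block_sum) auto
  also have "\<dots> = of_nat (fact (R v)) * (\<Prod>v\<leftarrow>G. of_nat (fact (R v)) :: 'a)"
    using Cons.IH Cons.prems by simp
  finally show ?case by simp
qed

lemma of_nat_fact_neq_0:
  assumes "n < CHAR('a::field)"
  shows "(of_nat (fact n) :: 'a) \<noteq> 0"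
  using assms
proof (induction n)
  case (Suc n)
  then have "\<not> CHAR('a) dvd Suc n" by (auto dest: dvd_imp_le)
  then have "(of_nat (Suc n) :: 'a) \<noteq> 0" by (simp only: of_nat_eq_0_iff_char_dvd) simp
  with Suc show ?case by (simp only: fact_Suc of_nat_mult) simp
qed simp

definition monomial_vars :: "nat \<Rightarrow> (nat \<Rightarrow> nat) \<Rightarrow> (nat \<times> nat) list" where
  "monomial_vars k h = concat (map (\<lambda>i. map (Pair i) [1..<Suc (h i)]) [1..<Suc k])"

lemma distinct_monomial_vars: "distinct (monomial_vars k h)"
proof -
  have "distinct (concat (map (\<lambda>i. map (Pair i) (xs i)) ys))"
    if "distinct ys" "\<forall>i. distinct (xs i)" for ys and xs :: "nat \<Rightarrow> nat list"
    using that by (induction ys) (auto simp: distinct_map inj_on_def)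
  then show ?thesis unfolding monomial_vars_def by simp
qed

lemma set_monomial_vars:
  "set (monomial_vars k h) = {(i, t). 1 \<le> i \<and> i \<le> k \<and> 1 \<le> t \<and> t \<le> h i}"
  unfolding monomial_vars_def by (auto simp: image_iff)

lemma concat_map_concat_map_Pair:
  "concat (map f (concat (map (\<lambda>i. map (Pair i) (xs i)) ys)))
    = concat (map (\<lambda>i. concat (map (\<lambda>t. f (i, t)) (xs i))) ys)"
  by (induction ys) (auto simp: comp_def)

lemma monomial_eval_eq_prod_vars:
  "monomial_eval k h r a
    = grass_prod_list (concat (map (\<lambda>(i, t). replicate (r i t) (a i t)) (monomial_vars k h)))"
  unfolding monomial_eval_def monomial_vars_def concat_map_concat_map_Pair by simp

definition witness_blocks :: "nat \<times> nat \<Rightarrow> nat \<Rightarrow> nat set" where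
  "witness_blocks v c = (\<lambda>j. prod_encode (prod_encode (prod_encode v, c), j)) ` {..<fst v}"

lemma finite_witness_blocks [simp]: "finite (witness_blocks v c)"
  by (simp add: witness_blocks_def)

lemma witness_blocks_eq_empty_iff: "witness_blocks v c = {} \<longleftrightarrow> fst v = 0"
  by (simp add: witness_blocks_def lessThan_empty_iff)

lemma card_witness_blocks: "card (witness_blocks v c) = fst v"
  unfolding witness_blocks_def by (subst card_image) (auto simp: inj_on_def)

lemma witness_blocks_disjoint:
  "(v, c) \<noteq> (v', c') \<Longrightarrow> witness_blocks v c \<inter> witness_blocks v' c' = {}"
  unfolding witness_blocks_def by (auto dest: inj_onD[OF inj_prod_encode, simplified])

lemma monomial_eval_witness:
  fixes r :: "nat \<Rightarrow> nat \<Rightarrow> nat"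
  defines "R v \<equiv> r (fst v) (snd v)"
  shows "monomial_eval k h r (\<lambda>i t. block_sum (r i t) (witness_blocks (i, t)))
      (blocks (\<Union>v\<in>set (monomial_vars k h). \<Union>c<R v. witness_blocks v c))
    = (\<Prod>v\<leftarrow>monomial_vars k h. of_nat (fact (R v)) :: 'a::field)"
proof -
  have "monomial_eval k h r (\<lambda>i t. block_sum (r i t) (witness_blocks (i, t)) :: nat set \<Rightarrow> 'a)
      = grass_prod_list (concat (map (\<lambda>v. replicate (R v) (block_sum (R v) (witness_blocks v)))
          (monomial_vars k h)))"
    unfolding monomial_eval_eq_prod_vars R_def by (simp add: case_prod_unfold)
  moreover have "\<forall>v\<in>set (monomial_vars k h). \<forall>c<R v. finite (witness_blocks v c) \<and> witness_blocks v c \<noteq> {}"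
    by (auto simp: set_monomial_vars witness_blocks_eq_empty_iff)
  ultimately show ?thesis
    using distinct_monomial_vars witness_blocks_disjoint by (simp add: grass_prod_block_sums)
qed

theorem mainTheorem9:
  fixes k :: nat and h :: "nat \<Rightarrow> nat" and r :: "nat \<Rightarrow> nat \<Rightarrow> nat" and p :: nat
  assumes "infinite (UNIV :: 'a::field set)"
    and "CHAR('a) = p" and "p > 2"
    and "k \<ge> 1"
    and "\<forall>i t. 1 \<le> i \<and> i \<le> k \<and> 1 \<le> t \<and> t \<le> h i \<longrightarrow> r i t < p"
  shows "\<not> graded_identity_Einf k h r TYPE('a)"
proof
  assume "graded_identity_Einf k h r TYPE('a)"
  define a :: "nat \<Rightarrow> nat \<Rightarrow> nat set \<Rightarrow> 'a"
    where "a = (\<lambda>i t. block_sum (r i t) (witness_blocks (i, t)))"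
  have "grass_hom i (a i t)" for i t
    unfolding a_def by (rule grass_hom_block_sum) (simp add: card_witness_blocks)
  with \<open>graded_identity_Einf k h r TYPE('a)\<close> have "monomial_eval k h r a = (\<lambda>_. 0)"
    unfolding graded_identity_Einf_def by blast
  moreover have "(\<Prod>v\<leftarrow>monomial_vars k h. of_nat (fact (r (fst v) (snd v))) :: 'a) \<noteq> 0"
    using assms(2,5) by (auto simp: prod_list_zero_iff set_monomial_vars of_nat_fact_neq_0)
  ultimately show False
    using monomial_eval_witness[of k h r, where 'a = 'a] by (simp add: a_def)
qed

end
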